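(* Let $\alpha>0$, $p=\frac{\alpha}{1+\alpha}$, and $q\in(p,1)$. Let $S_t=\sum_{i=1}^t\zeta_i$ where $\zeta_1,\zeta_2,\dots$ are i.i.d. with $\mathbb P(\zeta_i=1)=1-q$ and $\mathbb P(\zeta_i=-1/\alpha)=q$. Then $$\mathbb P\Big(\max_{t\ge1}S_t\le 0\Big)\ \le\ q\min\Big\{\frac{2(q-p)}{p(1-q)},\,1\Big\}.$$ *)

theory Defs
  imports "HOL-Probability.Probability"
begin

end

theory Submission
  imports Defs
begin

(* Write a = 1/\<alpha> for the size of a down-step.  For \<theta> = 2 (q a - (1 - q)) / ((1 - q) (1 + a))
   the step moment generating function satisfies E exp(\<theta> \<zeta>) \<ge> 1, so exp(\<theta> (x + S_t)) is a
   submartingale.  An up-step has size 1, so a walk started at x \<le> 0 overshoots 0 by at most 1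
   when it first becomes positive; optional stopping then bounds the probability that it stays
   \<le> 0 forever by 1 - exp(\<theta> (x - 1)).  The first step must be a down-step (probability q,
   position -a), which gives q (1 - exp(-X)) with X = \<theta> (1 + a) = 2 (q - p) / (p (1 - q)),
   and 1 - exp(-X) \<le> min X 1.  Optional stopping is replaced by an induction over the
   finite-horizon survival recursion, whose error term decays geometrically because the walk
   has negative drift. *)

section \<open>An exponent with moment generating function at least one\<close>

definition step_mgf :: "real \<Rightarrow> real \<Rightarrow> real \<Rightarrow> real" where
  "step_mgf q a t = (1 - q) * exp t + q * exp (- a * t)"

lemma one_minus_exp_neg_le:
  fixes s :: real assumes "0 \<le> s"
  shows "(1 + s/2) * (1 - exp (- s)) \<le> s"
proof (cases "s \<ge> 2")
  case True
  have "(1 + s/2) * (1 - exp (- s)) \<le> (1 + s/2) * 1"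
    using True by (intro mult_left_mono) auto
  also have "\<dots> \<le> s" using True by simp
  finally show ?thesis .
next
  case False
  let ?\<phi> = "\<lambda>s::real. (1 + s/2) * exp (- s) - (1 - s/2)"
  have "?\<phi> 0 \<le> ?\<phi> s"
  proof (rule DERIV_nonneg_imp_increasing_open[OF assms])
    fix y :: real assume "0 < y" "y < s"
    have "DERIV ?\<phi> y :> ((1/2) * exp (- y) + (1 + y/2) * (exp (- y) * (-1)) - (- 1/2))"
      by (auto intro!: derivative_eq_intros)
    moreover have "(1 + y) * exp (- y) \<le> exp y * exp (- y)"
      using exp_ge_add_one_self[of y] by (intro mult_right_mono) auto
    then have "(1 + y) * exp (- y) \<le> 1" by (simp add: exp_minus_inverse)
    then have "(1/2) * exp (- y) + (1 + y/2) * (exp (- y) * (-1)) - (- 1/2) \<ge> 0"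
      by (simp add: algebra_simps)
    ultimately show "\<exists>d. DERIV ?\<phi> y :> d \<and> 0 \<le> d" by blast
  qed (intro continuous_intros, auto)
  then have "1 - s/2 \<le> (1 + s/2) * exp (- s)" by simp
  then show ?thesis by (simp add: algebra_simps add_divide_distrib diff_divide_distrib)
qed

lemma step_mgf_ge_one:
  fixes a q :: real
  assumes a: "a > 0" and q: "0 < q" "q < 1" and drift: "1 - q < q * a"
  defines "\<theta> \<equiv> 2 * (q * a - (1 - q)) / ((1 - q) * (1 + a))"
  shows "1 \<le> step_mgf q a \<theta>"
proof -
  have \<theta>: "\<theta> > 0" using assms unfolding \<theta>_def by (auto intro!: divide_pos_pos)
  have \<theta>_eq: "\<theta> * ((1 - q) * (1 + a)) = 2 * (q * a - (1 - q))"
    using q a unfolding \<theta>_def by simp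
  have "(1 - q) * (1 + (1 + a) * \<theta> / 2) = (1 - q) + \<theta> * ((1 - q) * (1 + a)) / 2"
    by (simp add: algebra_simps)
  also have "\<dots> = q * a"
    unfolding \<theta>_eq by (simp add: field_simps)
  finally have qa: "q * a = (1 - q) * (1 + (1 + a) * \<theta> / 2)" ..
  define s where "s = a * \<theta>"
  have s: "s \<ge> 0" using \<theta> a by (simp add: s_def)
  have "(1 + (1 + a) * \<theta> / 2) * (1 - exp (- s)) \<le> (1 + \<theta>/2) * (1 + s/2) * (1 - exp (- s))"
    using \<theta> a s by (intro mult_right_mono) (auto simp: s_def algebra_simps)
  also have "\<dots> \<le> (1 + \<theta>/2) * s"
    using one_minus_exp_neg_le[OF s] \<theta> unfolding mult.assoc by (intro mult_left_mono) auto
  also have "\<dots> = a * (\<theta> + \<theta>^2/2)"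
    by (simp add: s_def power2_eq_square algebra_simps)
  also have "\<dots> \<le> a * (exp \<theta> - 1)"
    using exp_lower_Taylor_quadratic[of \<theta>] \<theta> a by (intro mult_left_mono) auto
  finally have "q * a * (1 - exp (- s)) \<le> (1 - q) * (a * (exp \<theta> - 1))"
    unfolding qa using q by (simp add: mult.assoc mult_left_mono)
  then have "a * (q * (1 - exp (- s))) \<le> a * ((1 - q) * (exp \<theta> - 1))"
    by (simp add: algebra_simps)
  then have "q * (1 - exp (- s)) \<le> (1 - q) * (exp \<theta> - 1)" using a by simp
  then show ?thesis by (simp add: step_mgf_def s_def algebra_simps)
qed

lemma step_mgf_less_one_near_zero:
  assumes drift: "1 - q < q * a" and "\<theta> > 0"
  obtains t where "0 < t" "t \<le> \<theta>" "step_mgf q a t < 1"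
proof -
  have "DERIV (step_mgf q a) 0 :> ((1 - q) * exp 0 + q * (exp (- a * 0) * (- a)))"
    unfolding step_mgf_def by (auto intro!: derivative_eq_intros)
  then have "DERIV (step_mgf q a) 0 :> (1 - q) - q * a" by simp
  then obtain d where d: "d > 0" "\<And>h. h > 0 \<Longrightarrow> h < d \<Longrightarrow> step_mgf q a h < step_mgf q a 0"
    using DERIV_neg_dec_right drift by (metis add_0 diff_less_0_iff_less)
  show ?thesis
    by (rule that[of "min \<theta> (d / 2)"]) (use d \<open>\<theta> > 0\<close> in \<open>auto simp: step_mgf_def\<close>)
qed

section \<open>The survival recursion\<close>

(* survival_mean q a g n x is the expectation of g(x + S_n) on the event that the walk started
   at x stays \<le> 0 during steps 1..n; the steps are +1 with probability 1 - q and -a with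
   probability q. *)
fun survival_mean :: "real \<Rightarrow> real \<Rightarrow> (real \<Rightarrow> real) \<Rightarrow> nat \<Rightarrow> real \<Rightarrow> real" where
  "survival_mean q a g 0 x = g x"
| "survival_mean q a g (Suc n) x =
      (1 - q) * (if x + 1 \<le> 0 then survival_mean q a g n (x + 1) else 0)
    + q * (if x - a \<le> 0 then survival_mean q a g n (x - a) else 0)"

lemma survival_mean_diff:
  "survival_mean q a (\<lambda>y. g y - h y) n x = survival_mean q a g n x - survival_mean q a h n x"
  by (induction n arbitrary: x) (simp_all add: right_diff_distrib)

lemma survival_mean_mono:
  assumes "0 \<le> q" "q \<le> 1" and "a > 0" and gh: "\<And>y. y \<le> 0 \<Longrightarrow> g y \<le> h y"
  shows "x \<le> 0 \<Longrightarrow> survival_mean q a g n x \<le> survival_mean q a h n x"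
proof (induction n arbitrary: x)
  case (Suc n)
  then show ?case
    using assms Suc.IH[of "x + 1"] Suc.IH[of "x - a"]
    by (auto intro!: add_mono mult_left_mono)
qed (use gh in simp)

lemma survival_mean_le_superharmonic:
  assumes "0 \<le> q" "q \<le> 1" and "a > 0"
    and super: "\<And>y. y \<le> 0 \<Longrightarrow> survival_mean q a g (Suc 0) y \<le> g y"
  shows "x \<le> 0 \<Longrightarrow> survival_mean q a g n x \<le> g x"
proof (induction n arbitrary: x)
  case (Suc n)
  have "survival_mean q a g (Suc n) x = survival_mean q a (survival_mean q a g n) (Suc 0) x"
    by simp
  also have "\<dots> \<le> survival_mean q a g (Suc 0) x"
    using Suc assms by (intro survival_mean_mono) auto
  also have "\<dots> \<le> g x"
    by (rule super[OF Suc.prems])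
  finally show ?case .
qed simp

lemma survival_mean_exp_le:
  assumes "0 \<le> q" "q \<le> 1" and "c \<ge> 0"
  shows "survival_mean q a (\<lambda>y. c * exp (t * y)) n x \<le> c * exp (t * x) * step_mgf q a t ^ n"
proof (induction n arbitrary: x)
  case (Suc n)
  let ?b = "\<lambda>y. c * exp (t * y) * step_mgf q a t ^ n"
  have "0 \<le> step_mgf q a t"
    using assms by (simp add: step_mgf_def)
  then have b: "(if y \<le> 0 then survival_mean q a (\<lambda>y. c * exp (t * y)) n y else 0) \<le> ?b y" for y
    using Suc.IH[of y] assms by auto
  have "survival_mean q a (\<lambda>y. c * exp (t * y)) (Suc n) x \<le> (1 - q) * ?b (x + 1) + q * ?b (x - a)"
    using b[of "x + 1"] b[of "x - a"] assms
    unfolding survival_mean.simps by (intro add_mono mult_left_mono) auto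
  also have "\<dots> = c * exp (t * x) * step_mgf q a t ^ Suc n"
  proof -
    have "exp (t * (x + 1)) = exp (t * x) * exp t" "exp (t * (x - a)) = exp (t * x) * exp (- a * t)"
      by (simp_all add: algebra_simps flip: exp_add)
    then show ?thesis by (simp add: step_mgf_def algebra_simps)
  qed
  finally show ?case .
qed simp

(* One up-step overshoots 0 by at most 1, so the survival probability is controlled by the
   submartingale exp(\<theta> (x - 1)), up to the mass still alive at time n. *)
lemma survival_mean_one_le:
  assumes q: "0 \<le> q" "q \<le> 1" and a: "a > 0" and \<theta>: "\<theta> \<ge> 0"
    and mgf: "1 \<le> step_mgf q a \<theta>" and x: "x \<le> 0"
  shows "survival_mean q a (\<lambda>_. 1) n x
    \<le> 1 - exp (\<theta> * (x - 1)) + survival_mean q a (\<lambda>y. exp (\<theta> * (y - 1))) n x"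
proof -
  let ?h = "\<lambda>y. exp (\<theta> * (y - 1))"
  have "survival_mean q a (\<lambda>y. 1 - ?h y) (Suc 0) y \<le> 1 - ?h y" if "y \<le> 0" for y
  proof -
    have "?h y \<le> ?h y * step_mgf q a \<theta>"
      using mgf by simp
    also have "\<dots> = (1 - q) * ?h (y + 1) + q * ?h (y - a)"
      by (simp add: step_mgf_def algebra_simps flip: exp_add)
    finally have "?h y \<le> (1 - q) * ?h (y + 1) + q * ?h (y - a)" .
    moreover have "0 \<le> (1 - q) * (1 - ?h (y + 1))"
      using q \<theta> that by (simp add: mult_nonneg_nonpos)
    ultimately show ?thesis
      using that a by (auto simp: algebra_simps)
  qed
  then have "survival_mean q a (\<lambda>y. 1 - ?h y) n x \<le> 1 - ?h x"
    using survival_mean_le_superharmonic q a x by blast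
  then show ?thesis
    using survival_mean_diff[of q a "\<lambda>_. 1" ?h n x] by simp
qed

lemma survival_mean_one_tendsto_le:
  assumes a: "a > 0" and q: "0 < q" "q < 1" and drift: "1 - q < q * a" and x: "x \<le> 0"
  defines "\<theta> \<equiv> 2 * (q * a - (1 - q)) / ((1 - q) * (1 + a))"
  obtains c where "\<And>n. survival_mean q a (\<lambda>_. 1) n x \<le> 1 - exp (\<theta> * (x - 1)) + c n"
    and "c \<longlonglongrightarrow> 0"
proof -
  have \<theta>: "\<theta> > 0" using assms unfolding \<theta>_def by (auto intro!: divide_pos_pos)
  obtain t where t: "0 < t" "t \<le> \<theta>" "step_mgf q a t < 1"
    using step_mgf_less_one_near_zero[OF drift \<theta>] .
  have mgf: "1 \<le> step_mgf q a \<theta>"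
    unfolding \<theta>_def by (rule step_mgf_ge_one[OF a q drift])
  let ?c = "\<lambda>n. exp (- \<theta>) * exp (t * x) * step_mgf q a t ^ n"
  have alive: "survival_mean q a (\<lambda>y. exp (\<theta> * (y - 1))) n x \<le> ?c n" for n
  proof -
    have "exp (\<theta> * (y - 1)) \<le> exp (- \<theta>) * exp (t * y)" if "y \<le> 0" for y
      using mult_right_mono_neg[OF t(2) that] by (simp add: algebra_simps flip: exp_add)
    then have "survival_mean q a (\<lambda>y. exp (\<theta> * (y - 1))) n x
        \<le> survival_mean q a (\<lambda>y. exp (- \<theta>) * exp (t * y)) n x"
      using q a x by (intro survival_mean_mono) auto
    also have "\<dots> \<le> ?c n"
      using q by (intro survival_mean_exp_le) auto
    finally show ?thesis .
  qed
  show ?thesis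
  proof (rule that)
    show "survival_mean q a (\<lambda>_. 1) n x \<le> 1 - exp (\<theta> * (x - 1)) + ?c n" for n
      using survival_mean_one_le[OF _ _ a _ mgf x, of n] alive[of n] \<theta> q by linarith
    show "?c \<longlonglongrightarrow> 0"
      using t q by (intro tendsto_mult_right_zero LIMSEQ_power_zero) (auto simp: step_mgf_def)
  qed
qed

section \<open>Survival probabilities of the walk\<close>

definition walk_stays_nonpos :: "nat \<Rightarrow> nat \<Rightarrow> real \<Rightarrow> (nat \<Rightarrow> real) set" where
  "walk_stays_nonpos n k x = {f. \<forall>j\<in>{1..n}. x + (\<Sum>i\<in>{k..<k+j}. f i) \<le> 0}"

lemma walk_stays_nonpos_0 [simp]: "walk_stays_nonpos 0 k x = UNIV"
  by (simp add: walk_stays_nonpos_def)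

lemma walk_stays_nonpos_Suc:
  "f \<in> walk_stays_nonpos (Suc n) k x \<longleftrightarrow> x + f k \<le> 0 \<and> f \<in> walk_stays_nonpos n (Suc k) (x + f k)"
proof -
  have shift: "(\<Sum>i\<in>{k..<k+Suc j}. f i) = f k + (\<Sum>i\<in>{Suc k..<Suc k+j}. f i)" for j
    by (simp add: sum.atLeast_Suc_lessThan)
  have split: "(\<forall>j\<in>{1..Suc n}. P j) \<longleftrightarrow> P 1 \<and> (\<forall>j\<in>{1..n}. P (Suc j))" for P :: "nat \<Rightarrow> bool"
    by (auto simp: Ball_def) (metis Suc_le_mono le_Suc_eq not0_implies_Suc not_one_le_zero One_nat_def)
  show ?thesis
    unfolding walk_stays_nonpos_def mem_Collect_eq split shift by (simp add: add.assoc)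
qed

lemma restrict_mem_walk_stays_nonpos [simp]:
  "restrict f {k..} \<in> walk_stays_nonpos n k x \<longleftrightarrow> f \<in> walk_stays_nonpos n k x"
  by (simp add: walk_stays_nonpos_def)

lemma walk_stays_nonpos_sets:
  "walk_stays_nonpos n k x \<inter> space (PiM {k..} (\<lambda>_. borel))
     \<in> sets (PiM {k..} (\<lambda>_. borel :: real measure))"
proof -
  let ?N = "PiM {k..} (\<lambda>_. borel :: real measure)"
  have [measurable]: "(\<lambda>f. x + (\<Sum>i\<in>{k..<k+j}. f i)) \<in> borel_measurable ?N" for j
    by (intro borel_measurable_add borel_measurable_const borel_measurable_sum
        measurable_component_singleton) auto
  have "walk_stays_nonpos n k x \<inter> space ?N
      = {f \<in> space ?N. \<forall>j\<in>{1..n}. x + (\<Sum>i\<in>{k..<k+j}. f i) \<le> 0}"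
    by (auto simp: walk_stays_nonpos_def)
  also have "\<dots> \<in> sets ?N"
    by measurable
  finally show ?thesis .
qed

context prob_space
begin

lemma prob_eq_add_Int_of_prob_Un_eq_1:
  assumes "A \<in> events" "B \<in> events" "C \<in> events" "B \<inter> C = {}" "prob (B \<union> C) = 1"
  shows "prob A = prob (A \<inter> B) + prob (A \<inter> C)"
proof -
  have "prob A = prob (A \<inter> (B \<union> C))"
    using AE_prob_1[OF assms(5)] assms by (intro measure_eq_AE) auto
  also have "\<dots> = prob (A \<inter> B) + prob (A \<inter> C)"
    using assms by (subst finite_measure_Union[symmetric]) (auto simp: Int_Un_distrib)
  finally show ?thesis .
qed

lemma walk_stays_nonpos_events:
  assumes "\<And>i. i \<ge> k \<Longrightarrow> \<zeta> i \<in> borel_measurable M"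
  shows "{\<omega> \<in> space M. (\<lambda>i. \<zeta> i \<omega>) \<in> walk_stays_nonpos n k x} \<in> events"
proof -
  let ?N = "PiM {k..} (\<lambda>_. borel :: real measure)"
  have "(\<lambda>\<omega>. restrict (\<lambda>i. \<zeta> i \<omega>) {k..}) \<in> measurable M ?N"
    using assms by (intro measurable_restrict) auto
  from measurable_sets[OF this walk_stays_nonpos_sets]
  have "(\<lambda>\<omega>. restrict (\<lambda>i. \<zeta> i \<omega>) {k..}) -` (walk_stays_nonpos n k x \<inter> space ?N) \<inter> space M \<in> events" .
  also have "(\<lambda>\<omega>. restrict (\<lambda>i. \<zeta> i \<omega>) {k..}) -` (walk_stays_nonpos n k x \<inter> space ?N) \<inter> space M
      = {\<omega> \<in> space M. (\<lambda>i. \<zeta> i \<omega>) \<in> walk_stays_nonpos n k x}"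
    by (auto simp: space_PiM)
  finally show ?thesis .
qed

lemma prob_walk_stays_nonpos_Suc_Int:
  fixes \<zeta> :: "nat \<Rightarrow> 'a \<Rightarrow> real"
  assumes ind: "indep_vars (\<lambda>_. borel) \<zeta> {1..}" and k: "k \<ge> 1"
  shows "prob ({\<omega> \<in> space M. (\<lambda>i. \<zeta> i \<omega>) \<in> walk_stays_nonpos (Suc n) k x} \<inter> {\<omega> \<in> space M. \<zeta> k \<omega> = c})
    = prob {\<omega> \<in> space M. \<zeta> k \<omega> = c}
      * (if x + c \<le> 0 then prob {\<omega> \<in> space M. (\<lambda>i. \<zeta> i \<omega>) \<in> walk_stays_nonpos n (Suc k) (x + c)} else 0)"
proof (cases "x + c \<le> 0")
  case True
  let ?A = "\<lambda>\<omega>. restrict (\<lambda>i. \<zeta> i \<omega>) {k}"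
  let ?B = "\<lambda>\<omega>. restrict (\<lambda>i. \<zeta> i \<omega>) {Suc k..}"
  let ?NA = "PiM {k} (\<lambda>_. borel :: real measure)"
  let ?NB = "PiM {Suc k..} (\<lambda>_. borel :: real measure)"
  let ?X = "{f \<in> space ?NA. f k = c}"
  let ?Y = "walk_stays_nonpos n (Suc k) (x + c) \<inter> space ?NB"
  have "indep_var ?NA ?A ?NB ?B"
    by (rule indep_var_restrict[OF ind]) (use k in auto)
  moreover have "(\<lambda>f. f k) \<in> borel_measurable ?NA"
    by (rule measurable_component_singleton) auto
  then have "?X \<in> sets ?NA"
    by measurable
  ultimately have "prob ((\<lambda>\<omega>. (?A \<omega>, ?B \<omega>)) -` (?X \<times> ?Y) \<inter> space M)
      = prob (?A -` ?X \<inter> space M) * prob (?B -` ?Y \<inter> space M)"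
    using walk_stays_nonpos_sets by (rule indep_varD)
  moreover have "(\<lambda>\<omega>. (?A \<omega>, ?B \<omega>)) -` (?X \<times> ?Y) \<inter> space M
      = {\<omega> \<in> space M. (\<lambda>i. \<zeta> i \<omega>) \<in> walk_stays_nonpos (Suc n) k x} \<inter> {\<omega> \<in> space M. \<zeta> k \<omega> = c}"
    using True by (auto simp: walk_stays_nonpos_Suc space_PiM)
  moreover have "?A -` ?X \<inter> space M = {\<omega> \<in> space M. \<zeta> k \<omega> = c}"
    by (auto simp: space_PiM)
  moreover have "?B -` ?Y \<inter> space M = {\<omega> \<in> space M. (\<lambda>i. \<zeta> i \<omega>) \<in> walk_stays_nonpos n (Suc k) (x + c)}"
    by (auto simp: space_PiM)
  ultimately show ?thesis
    using True by simp
next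
  case False
  then have "{\<omega> \<in> space M. (\<lambda>i. \<zeta> i \<omega>) \<in> walk_stays_nonpos (Suc n) k x} \<inter> {\<omega> \<in> space M. \<zeta> k \<omega> = c} = {}"
    by (auto simp: walk_stays_nonpos_Suc)
  then show ?thesis
    using False by simp
qed

lemma prob_walk_stays_nonpos:
  fixes \<zeta> :: "nat \<Rightarrow> 'a \<Rightarrow> real"
  assumes ind: "indep_vars (\<lambda>_. borel) \<zeta> {1..}" and a: "a > 0"
    and up: "\<And>i. i \<ge> 1 \<Longrightarrow> prob {\<omega> \<in> space M. \<zeta> i \<omega> = 1} = 1 - q"
    and down: "\<And>i. i \<ge> 1 \<Longrightarrow> prob {\<omega> \<in> space M. \<zeta> i \<omega> = - a} = q"
  shows "k \<ge> 1 \<Longrightarrow> prob {\<omega> \<in> space M. (\<lambda>i. \<zeta> i \<omega>) \<in> walk_stays_nonpos n k x}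
    = survival_mean q a (\<lambda>_. 1) n x"
proof (induction n arbitrary: k x)
  case 0
  then show ?case by (simp add: prob_space)
next
  case (Suc n)
  have [measurable]: "\<zeta> i \<in> borel_measurable M" if "i \<ge> 1" for i
    using ind that unfolding indep_vars_def by auto
  let ?E = "\<lambda>n k x. {\<omega> \<in> space M. (\<lambda>i. \<zeta> i \<omega>) \<in> walk_stays_nonpos n k x}"
  let ?U = "{\<omega> \<in> space M. \<zeta> k \<omega> = 1}" and ?D = "{\<omega> \<in> space M. \<zeta> k \<omega> = - a}"
  have "?U \<in> events" "?D \<in> events"
    using Suc.prems by measurable
  moreover have "?U \<inter> ?D = {}"
    using a by auto
  moreover have "prob (?U \<union> ?D) = 1"
    using finite_measure_Union[OF calculation] up[OF Suc.prems] down[OF Suc.prems] by simp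
  ultimately have "prob (?E (Suc n) k x) = prob (?E (Suc n) k x \<inter> ?U) + prob (?E (Suc n) k x \<inter> ?D)"
    using Suc.prems by (intro prob_eq_add_Int_of_prob_Un_eq_1 walk_stays_nonpos_events) auto
  then show ?case
    using Suc.prems up down Suc.IH[of "Suc k"]
    by (simp add: prob_walk_stays_nonpos_Suc_Int[OF ind])
qed

lemma prob_walk_never_positive_le:
  fixes \<zeta> :: "nat \<Rightarrow> 'a \<Rightarrow> real"
  assumes ind: "indep_vars (\<lambda>_. borel) \<zeta> {1..}"
    and a: "a > 0" and q: "0 < q" "q < 1" and drift: "1 - q < q * a"
    and up: "\<And>i. i \<ge> 1 \<Longrightarrow> prob {\<omega> \<in> space M. \<zeta> i \<omega> = 1} = 1 - q"
    and down: "\<And>i. i \<ge> 1 \<Longrightarrow> prob {\<omega> \<in> space M. \<zeta> i \<omega> = - a} = q"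
  shows "prob {\<omega> \<in> space M. \<forall>t\<ge>1. (\<Sum>i=1..t. \<zeta> i \<omega>) \<le> 0}
    \<le> q * (1 - exp (- (2 * (q * a - (1 - q)) / (1 - q))))"
proof -
  define \<theta> where "\<theta> = 2 * (q * a - (1 - q)) / ((1 - q) * (1 + a))"
  obtain c where bound: "\<And>n. survival_mean q a (\<lambda>_. 1) n (- a) \<le> 1 - exp (\<theta> * (- a - 1)) + c n"
    and "c \<longlonglongrightarrow> 0"
    using survival_mean_one_tendsto_le[OF a q drift, of "- a"] a unfolding \<theta>_def by auto
  let ?P = "prob {\<omega> \<in> space M. \<forall>t\<ge>1. (\<Sum>i=1..t. \<zeta> i \<omega>) \<le> 0}"
  have "?P \<le> q * (1 - exp (\<theta> * (- a - 1)) + c n)" for n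
  proof -
    have "?P \<le> prob {\<omega> \<in> space M. (\<lambda>i. \<zeta> i \<omega>) \<in> walk_stays_nonpos (Suc n) 1 0}"
      using ind unfolding indep_vars_def
      by (intro finite_measure_mono walk_stays_nonpos_events)
        (auto simp: walk_stays_nonpos_def atLeastLessThanSuc_atLeastAtMost)
    also have "\<dots> = q * survival_mean q a (\<lambda>_. 1) n (- a)"
      using prob_walk_stays_nonpos[OF ind a up down, of 1 "Suc n" 0] a by simp
    also have "\<dots> \<le> q * (1 - exp (\<theta> * (- a - 1)) + c n)"
      using bound q by (intro mult_left_mono) auto
    finally show ?thesis .
  qed
  moreover have "(\<lambda>n. q * (1 - exp (\<theta> * (- a - 1)) + c n)) \<longlonglongrightarrow> q * (1 - exp (\<theta> * (- a - 1)) + 0)"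
    by (intro tendsto_intros \<open>c \<longlonglongrightarrow> 0\<close>)
  ultimately have "?P \<le> q * (1 - exp (\<theta> * (- a - 1)))"
    using LIMSEQ_le_const by fastforce
  moreover have "\<theta> * (1 + a) = 2 * (q * a - (1 - q)) / (1 - q)"
    using a unfolding \<theta>_def by simp
  then have "\<theta> * (- a - 1) = - (2 * (q * a - (1 - q)) / (1 - q))"
    by (simp add: algebra_simps)
  ultimately show ?thesis by simp
qed

end

theorem lemma3:
  fixes M :: "'a measure" and \<alpha> q :: real and \<zeta> :: "nat \<Rightarrow> 'a \<Rightarrow> real"
  assumes "prob_space M"
    and "\<alpha> > 0"
    and "\<alpha> / (1 + \<alpha>) < q" and "q < 1"
    and "prob_space.indep_vars M (\<lambda>_. borel) \<zeta> {1..}"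
    and "\<And>i. i \<ge> 1 \<Longrightarrow> measure M {\<omega> \<in> space M. \<zeta> i \<omega> = 1} = 1 - q"
    and "\<And>i. i \<ge> 1 \<Longrightarrow> measure M {\<omega> \<in> space M. \<zeta> i \<omega> = - 1 / \<alpha>} = q"
  shows "measure M {\<omega> \<in> space M. \<forall>t\<ge>1. (\<Sum>i=1..t. \<zeta> i \<omega>) \<le> 0}
           \<le> q * min (2 * (q - \<alpha> / (1 + \<alpha>)) / ((\<alpha> / (1 + \<alpha>)) * (1 - q))) 1"
proof -
  interpret prob_space M by fact
  define X where "X = 2 * (q - \<alpha> / (1 + \<alpha>)) / ((\<alpha> / (1 + \<alpha>)) * (1 - q))"
  have q: "0 < q" "q < 1"
    using assms(2-4) by (auto intro: order.strict_trans[rotated])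
  have drift: "1 - q < q * (1 / \<alpha>)"
    using assms(2,3) by (simp add: field_simps)
  have "(q - \<alpha> / (1 + \<alpha>)) / (\<alpha> / (1 + \<alpha>)) = (q - \<alpha> / (1 + \<alpha>)) * ((1 + \<alpha>) / \<alpha>)"
    by simp
  also have "\<dots> = q * (1 / \<alpha>) - (1 - q)"
    using assms(2) by (simp add: add_divide_distrib algebra_simps)
  finally have "X = 2 * (q * (1 / \<alpha>) - (1 - q)) / (1 - q)"
    unfolding X_def by (metis divide_divide_eq_left times_divide_eq_right)
  then have "measure M {\<omega> \<in> space M. \<forall>t\<ge>1. (\<Sum>i=1..t. \<zeta> i \<omega>) \<le> 0} \<le> q * (1 - exp (- X))"
    using prob_walk_never_positive_le[OF assms(5) _ q drift] assms(2,6,7) by simp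
  also have "\<dots> \<le> q * min X 1"
    using exp_ge_add_one_self[of "- X"] q by (intro mult_left_mono) auto
  finally show ?thesis
    unfolding X_def .
qed

end
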